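(* An idempotent unital commutative semiring is fully elementary if and only if it is Frobenius.
   Context: A semiring $(X,+,0,\cdot)$: $(X,+,0)$ commutative monoid, $(X,\cdot)$ semigroup, distributivity, $0$ absorbing. Unital: has a multiplicative unit; idempotent: $x+x=x$ for all $x$. $X$ is Frobenius if $(x+y)^n=x^n+y^n$ for all $x,y\in X$ and all integers $n\ge1$. Polynomials in $n$ variables are functions $X^n\to X$ represented by formal expressions $\sum_{k} a_k\prod_{j=1}^n x_j^{d_{k,j}}$ ($a_k\in X$). A polynomial is symmetric if represented by an expression which, with each monomial $a_k\prod_j x_j^{d_{k,j}}$, contains all monomials $a_k\prod_j x_{\sigma(j)}^{d_{k,j}}$, $\sigma\in S_n$. $e_j$ is the sum of all products of $j$ distinct variables among $x_1,\dots,x_n$. $X$ is $n$-elementary if every symmetric polynomial $p$ in $n$ variables equals $r(e_1,\dots,e_n)$ (as functions on $X^n$) for some polynomial $r$; fully elementary if $n$-elementary for all $n\in\mathbb{N}$. *)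

theory Defs
  imports "HOL-Combinatorics.Permutations"
begin

text \<open>Unital commutative semiring (0 absorbing); 0 = 1 is NOT excluded.\<close>
class unital_comm_semiring = comm_semiring_0 + comm_monoid_mult

definition idempotent_sr :: "'a::unital_comm_semiring itself \<Rightarrow> bool" where
  "idempotent_sr _ \<longleftrightarrow> (\<forall>x::'a. x + x = x)"

definition frobenius :: "'a::unital_comm_semiring itself \<Rightarrow> bool" where
  "frobenius _ \<longleftrightarrow> (\<forall>(x::'a) y. \<forall>n::nat. n \<ge> 1 \<longrightarrow> (x + y) ^ n = x ^ n + y ^ n)"

text \<open>Formal polynomial expressions: lists of monomials (a, d), coefficient a and
  exponent vector d (a list whose length is the number of variables).\<close>
type_synonym 'a pexpr = "('a \<times> nat list) list"

definition is_pexpr :: "nat \<Rightarrow> 'a pexpr \<Rightarrow> bool" where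
  "is_pexpr n p \<longleftrightarrow> (\<forall>(a, d) \<in> set p. length d = n)"

definition peval :: "'a::unital_comm_semiring pexpr \<Rightarrow> (nat \<Rightarrow> 'a) \<Rightarrow> 'a" where
  "peval p x = (\<Sum>(a, d) \<leftarrow> p. a * (\<Prod>j<length d. x j ^ (d ! j)))"

definition sym_pexpr :: "nat \<Rightarrow> 'a pexpr \<Rightarrow> bool" where
  "sym_pexpr n p \<longleftrightarrow> is_pexpr n p \<and>
     (\<forall>(a, d) \<in> set p. \<forall>\<sigma>. \<sigma> permutes {..<n} \<longrightarrow> (a, map (\<lambda>j. d ! \<sigma> j) [0..<n]) \<in> set p)"

definition esym :: "nat \<Rightarrow> nat \<Rightarrow> (nat \<Rightarrow> 'a::unital_comm_semiring) \<Rightarrow> 'a" where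
  "esym n j x = (\<Sum>S \<in> {S. S \<subseteq> {..<n} \<and> card S = j}. \<Prod>i\<in>S. x i)"

definition n_elementary :: "nat \<Rightarrow> 'a::unital_comm_semiring itself \<Rightarrow> bool" where
  "n_elementary n _ \<longleftrightarrow>
     (\<forall>p :: 'a pexpr. sym_pexpr n p \<longrightarrow>
        (\<exists>r :: 'a pexpr. is_pexpr n r \<and>
           (\<forall>x. peval p x = peval r (\<lambda>j. esym n (Suc j) x))))"

definition fully_elementary :: "'a::unital_comm_semiring itself \<Rightarrow> bool" where
  "fully_elementary T \<longleftrightarrow> (\<forall>n. n_elementary n T)"

end

theory Submission
  imports Defs
begin

text \<open>In an idempotent semiring addition is the join of the natural order
  \<open>u \<preceq> v \<longleftrightarrow> u + v = v\<close>, and polynomial functions are monotone for it.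

  If the semiring is 2-elementary, \<open>x\<^sup>m + y\<^sup>m = r(x + y, x y)\<close> for some polynomial \<open>r\<close>. The points
  \<open>(x, y)\<close> and \<open>(x + y, 0)\<close> have the same \<open>e\<^sub>1\<close> while \<open>e\<^sub>2\<close> vanishes at the second, so monotonicity
  gives \<open>(x + y)\<^sup>m \<preceq> x\<^sup>m + y\<^sup>m\<close>; the reverse inequality holds in every idempotent semiring.

  Conversely, the Frobenius property gives the exchange inequality \<open>u\<^sup>a v \<preceq> u\<^sup>a\<^sup>+\<^sup>1 + v\<^sup>a\<^sup>+\<^sup>1\<close>.
  Let \<open>d\<close> be an exponent vector vanishing outside a \<open>k\<close>-set \<open>S\<close>. Repeated exchanges push every
  term of \<open>e\<^sub>k\<close> times the orbit sum of \<open>x\<^sup>d\<close> below the orbit sum of \<open>x\<^sup>d\<close> with the exponents in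
  \<open>S\<close> raised by one, and each term of the latter occurs in the product, so the two agree.
  Induction on the degree then writes every orbit sum as a monomial in \<open>e\<^sub>1, \<dots>, e\<^sub>n\<close>, and by
  idempotence a symmetric polynomial is a linear combination of orbit sums.\<close>

definition sr_le :: "'a::unital_comm_semiring \<Rightarrow> 'a \<Rightarrow> bool" (infix "\<preceq>" 50) where
  "u \<preceq> v \<longleftrightarrow> u + v = v"

lemma sr_le_zero: "0 \<preceq> u"
  unfolding sr_le_def by simp

lemma sr_le_antisym: "u \<preceq> v \<Longrightarrow> v \<preceq> u \<Longrightarrow> u = v"
  unfolding sr_le_def by (metis add.commute)

lemma sr_le_trans [trans]: "u \<preceq> v \<Longrightarrow> v \<preceq> w \<Longrightarrow> u \<preceq> w"
  unfolding sr_le_def by (metis add.assoc)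

lemma sr_add_mono: "u \<preceq> v \<Longrightarrow> u' \<preceq> v' \<Longrightarrow> u + u' \<preceq> v + v'"
  unfolding sr_le_def by (metis add.assoc add.left_commute)

lemma sr_mult_right_mono: "u \<preceq> v \<Longrightarrow> u * w \<preceq> v * w"
  unfolding sr_le_def by (metis distrib_right)

lemma sr_mult_left_mono: "u \<preceq> v \<Longrightarrow> w * u \<preceq> w * v"
  unfolding sr_le_def by (metis distrib_left)

lemma sr_mult_mono: "u \<preceq> v \<Longrightarrow> u' \<preceq> v' \<Longrightarrow> u * u' \<preceq> v * v'"
  by (metis sr_mult_left_mono sr_mult_right_mono sr_le_trans)

lemma sr_sum_list_mono:
  "(\<And>z. z \<in> set xs \<Longrightarrow> f z \<preceq> g z) \<Longrightarrow> sum_list (map f xs) \<preceq> sum_list (map g xs)"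
  by (induction xs) (simp_all add: sr_le_zero sr_add_mono)

locale idempotent_semiring =
  fixes ty :: "'a::unital_comm_semiring itself"
  assumes add_idem: "(x::'a) + x = x"
begin

lemma sr_le_refl: "(u::'a) \<preceq> u"
  unfolding sr_le_def by (simp add: add_idem)

lemma sr_le_add1: "(u::'a) \<preceq> u + v"
  unfolding sr_le_def by (metis add.assoc add_idem)

lemma sr_le_add2: "(v::'a) \<preceq> u + v"
  using sr_le_add1 by (metis add.commute)

lemma sr_add_le: "(u::'a) \<preceq> w \<Longrightarrow> v \<preceq> w \<Longrightarrow> u + v \<preceq> w"
  unfolding sr_le_def by (metis add.assoc)

lemma sr_power_mono: "(u::'a) \<preceq> v \<Longrightarrow> u ^ m \<preceq> v ^ m"
  by (induction m) (auto simp: sr_le_refl sr_mult_mono)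

lemma sr_prod_mono: "(\<And>a. a \<in> A \<Longrightarrow> (f a::'a) \<preceq> g a) \<Longrightarrow> prod f A \<preceq> prod g A"
  by (induction A rule: infinite_finite_induct) (auto simp: sr_le_refl sr_mult_mono)

lemma sr_le_sum: "finite A \<Longrightarrow> a \<in> A \<Longrightarrow> (f a::'a) \<preceq> sum f A"
  by (metis sr_le_add1 sum.remove)

lemma sr_sum_le: "(\<And>a. a \<in> A \<Longrightarrow> (f a::'a) \<preceq> v) \<Longrightarrow> sum f A \<preceq> v"
  by (induction A rule: infinite_finite_induct) (auto simp: sr_le_zero sr_add_le)

lemma sr_le_sum_list: "z \<in> set xs \<Longrightarrow> (f z::'a) \<preceq> sum_list (map f xs)"
  by (induction xs) (auto simp: sr_le_add1 sr_le_add2 sr_le_trans)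

lemma sr_sum_list_le: "(\<And>z. z \<in> set xs \<Longrightarrow> (f z::'a) \<preceq> v) \<Longrightarrow> sum_list (map f xs) \<preceq> v"
  by (induction xs) (simp_all add: sr_le_zero sr_add_le)

lemma sum_const_idem: "finite A \<Longrightarrow> A \<noteq> {} \<Longrightarrow> (\<Sum>a\<in>A. (c::'a)) = c"
  by (induction A rule: finite_ne_induct) (auto simp: add_idem)

lemma power_add_ge: "(u::'a) ^ m + v ^ m \<preceq> (u + v) ^ m"
  by (intro sr_add_le sr_power_mono sr_le_add1 sr_le_add2)

lemma peval_mono:
  assumes "is_pexpr n r" and "\<And>j. j < n \<Longrightarrow> (f j::'a) \<preceq> g j"
  shows "peval r f \<preceq> peval r g"
  using assms unfolding peval_def is_pexpr_def
  by (auto intro!: sr_sum_list_mono sr_mult_left_mono sr_prod_mono sr_power_mono)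

end

lemma esym_one: "esym n 1 x = (\<Sum>i<n. x i)"
proof -
  have "{S. S \<subseteq> {..<n} \<and> card S = 1} = (\<lambda>i. {i}) ` {..<n}"
    by (auto simp: card_1_singleton_iff)
  then show ?thesis
    unfolding esym_def by (simp add: sum.reindex)
qed

lemma esym_self: "esym n n x = (\<Prod>i<n. x i)"
proof -
  have "{S. S \<subseteq> {..<n} \<and> card S = n} = {{..<n}}"
    using card_subset_eq[of "{..<n}"] by auto
  then show ?thesis
    unfolding esym_def by simp
qed

lemma sym_pexpr_power_sum: "sym_pexpr 2 [(a, [m, 0]), (a, [0, m])]"
proof -
  have perms_2: "\<sigma> 0 = 0 \<and> \<sigma> 1 = 1 \<or> \<sigma> 0 = 1 \<and> \<sigma> 1 = 0" if "\<sigma> permutes {..<2::nat}" for \<sigma>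
  proof -
    have "\<sigma> 0 < 2" "\<sigma> 1 < 2" "\<sigma> 0 \<noteq> \<sigma> 1"
      using permutes_in_image[OF that] permutes_inj[OF that] by (auto simp: inj_def)
    then show ?thesis by auto
  qed
  show ?thesis
    unfolding sym_pexpr_def is_pexpr_def by (auto simp: upt_rec dest!: perms_2)
qed

lemma (in idempotent_semiring) frobenius_power_if_2_elementary:
  assumes "n_elementary 2 ty" and "m \<ge> 1"
  shows "((x::'a) + y) ^ m = x ^ m + y ^ m"
proof -
  define p :: "'a pexpr" where "p = [(1, [m, 0]), (1, [0, m])]"
  have "sym_pexpr 2 p"
    unfolding p_def by (rule sym_pexpr_power_sum)
  then obtain r :: "'a pexpr" where r: "is_pexpr 2 r" "\<And>z. peval p z = peval r (\<lambda>j. esym 2 (Suc j) z)"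
    using assms(1) unfolding n_elementary_def by blast
  have p_eval: "peval p z = z 0 ^ m + z 1 ^ m" for z
    unfolding p_def peval_def by (simp add: lessThan_Suc)
  have lessThan_2: "{..<2::nat} = {0, 1}"
    by auto
  have e1: "esym 2 1 z = z 0 + z 1" and e2: "esym 2 2 z = z 0 * z 1" for z :: "nat \<Rightarrow> 'a"
    by (simp_all only: esym_one esym_self lessThan_2) simp_all
  define z1 where "z1 = (\<lambda>j::nat. if j = 0 then x else y)"
  define z2 where "z2 = (\<lambda>j::nat. if j = 0 then x + y else 0)"
  have "esym 2 (Suc j) z2 \<preceq> esym 2 (Suc j) z1" if "j < 2" for j
  proof -
    consider "Suc j = 1" | "Suc j = 2" using \<open>j < 2\<close> by linarith
    then show ?thesis
      by cases (simp_all only: e1 e2, simp_all add: z1_def z2_def sr_le_refl sr_le_zero)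
  qed
  then have "peval r (\<lambda>j. esym 2 (Suc j) z2) \<preceq> peval r (\<lambda>j. esym 2 (Suc j) z1)"
    by (rule peval_mono[OF r(1)])
  moreover have "peval p z2 = (x + y) ^ m"
    using assms(2) by (cases m) (simp_all add: p_eval z2_def)
  moreover have "peval p z1 = x ^ m + y ^ m"
    by (simp add: p_eval z1_def)
  ultimately have "(x + y) ^ m \<preceq> x ^ m + y ^ m"
    by (simp only: r(2))
  then show ?thesis
    using power_add_ge sr_le_antisym by blast
qed

definition monom :: "nat \<Rightarrow> (nat \<Rightarrow> nat) \<Rightarrow> (nat \<Rightarrow> 'a::unital_comm_semiring) \<Rightarrow> 'a" where
  "monom n d x = (\<Prod>j<n. x j ^ d j)"

text \<open>Summing over all permutations rather than over the distinct permuted exponent vectors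
  gives the monomial symmetric function only because addition is idempotent.\<close>

definition orbit_sum :: "nat \<Rightarrow> (nat \<Rightarrow> nat) \<Rightarrow> (nat \<Rightarrow> 'a::unital_comm_semiring) \<Rightarrow> 'a" where
  "orbit_sum n d x = (\<Sum>\<sigma> | \<sigma> permutes {..<n}. monom n (d \<circ> \<sigma>) x)"

definition incr_on :: "nat set \<Rightarrow> (nat \<Rightarrow> nat) \<Rightarrow> nat \<Rightarrow> nat" where
  "incr_on S d j = d j + of_bool (j \<in> S)"

lemma finite_permutes_lessThan: "finite {\<sigma>. \<sigma> permutes {..<n::nat}}"
  by (rule finite_permutations) simp

lemma monom_cong: "(\<And>j. j < n \<Longrightarrow> f j = g j) \<Longrightarrow> monom n f x = monom n g x"
  unfolding monom_def by (rule prod.cong) auto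

lemma orbit_sum_cong: "(\<And>j. j < n \<Longrightarrow> f j = g j) \<Longrightarrow> orbit_sum n f x = orbit_sum n g x"
  unfolding orbit_sum_def by (intro sum.cong refl monom_cong) (auto dest: permutes_in_image)

lemma monom_mult: "monom n f x * monom n g x = monom n (\<lambda>j. f j + g j) x"
  unfolding monom_def by (simp add: prod.distrib[symmetric] power_add)

lemma monom_of_bool:
  assumes "S \<subseteq> {..<n}"
  shows "monom n (\<lambda>j. of_bool (j \<in> S)) x = (\<Prod>i\<in>S. x i)"
proof -
  have "monom n (\<lambda>j. of_bool (j \<in> S)) x = (\<Prod>j<n. if j \<in> S then x j else 1)"
    unfolding monom_def by (intro prod.cong) auto
  also have "\<dots> = (\<Prod>i\<in>S. x i)"
    using assms by (simp add: prod.inter_restrict[symmetric] Int_absorb1)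
  finally show ?thesis .
qed

lemma prod_mult_monom:
  assumes "S \<subseteq> {..<n}" and "\<sigma> permutes {..<n}"
  shows "(\<Prod>i\<in>S. x i) * monom n (d \<circ> \<sigma>) x = monom n (incr_on (\<sigma> ` S) d \<circ> \<sigma>) x"
proof -
  have "inj \<sigma>"
    using assms(2) by (rule permutes_inj)
  then show ?thesis
    unfolding monom_of_bool[OF assms(1), symmetric] monom_mult
    by (intro monom_cong) (simp add: incr_on_def inj_image_mem_iff)
qed

lemma esym_mult_orbit_sum_expand:
  "esym n (card S) x * orbit_sum n d x =
    (\<Sum>T | T \<subseteq> {..<n} \<and> card T = card S. \<Sum>\<sigma> | \<sigma> permutes {..<n}.
       monom n (incr_on (\<sigma> ` T) d \<circ> \<sigma>) x)"
  unfolding esym_def orbit_sum_def sum_product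
  by (intro sum.cong[OF refl]) (simp add: prod_mult_monom)

lemma prod_power_list_update_Suc:
  assumes "k < length c"
  shows "y k * (\<Prod>j<length c. y j ^ (c ! j)) = (\<Prod>j<length c. y j ^ (c[k := Suc (c ! k)] ! j))"
proof -
  let ?R = "\<Prod>j\<in>{..<length c} - {k}. y j ^ (c ! j)"
  have "(\<Prod>j\<in>{..<length c} - {k}. y j ^ (c[k := Suc (c ! k)] ! j)) = ?R"
    by (intro prod.cong) auto
  then have "(\<Prod>j<length c. y j ^ (c[k := Suc (c ! k)] ! j)) = y k ^ Suc (c ! k) * ?R"
    using assms by (simp add: prod.remove[of _ k])
  moreover have "(\<Prod>j<length c. y j ^ (c ! j)) = y k ^ (c ! k) * ?R"
    using assms by (simp add: prod.remove[of _ k])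
  ultimately show ?thesis
    by (simp add: mult.assoc)
qed

lemma obtain_exchange_pair:
  assumes "finite T" "finite S" "card T = card S" "\<not> T \<subseteq> S"
  obtains i j where "i \<in> T" "i \<notin> S" "j \<in> S" "j \<notin> T"
    "card (insert j (T - {i})) = card S" "card (insert j (T - {i}) - S) < card (T - S)"
proof -
  obtain i where i: "i \<in> T" "i \<notin> S"
    using assms(4) by blast
  have "\<not> S \<subseteq> T"
    using assms card_subset_eq[OF assms(1) _ assms(3)[symmetric]] by blast
  then obtain j where j: "j \<in> S" "j \<notin> T"
    by blast
  have "card T \<noteq> 0"
    using assms(1) i by auto
  then have "card (insert j (T - {i})) = card S"
    using assms(1,3) i j by (simp add: card_insert_disjoint)
  moreover have "card (insert j (T - {i}) - S) < card (T - S)"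
  proof -
    have "insert j (T - {i}) - S = (T - S) - {i}"
      using i j by auto
    then show ?thesis
      using assms(1) i by (simp only:) (intro card_Diff1_less finite_Diff, auto)
  qed
  ultimately show ?thesis
    using i j that by blast
qed

lemma incr_on_exchange_comp:
  assumes \<sigma>: "\<sigma> permutes A" and "i \<in> T" "j \<notin> T" "d i = 0"
  defines "T' \<equiv> insert j (T - {i})" and "g \<equiv> incr_on T d \<circ> \<sigma>"
  shows "incr_on T' d \<circ> \<sigma> = g(inv \<sigma> i := 0, inv \<sigma> j := Suc (d j))"
    and "incr_on T' d \<circ> (Transposition.transpose i j \<circ> \<sigma>) = g(inv \<sigma> i := Suc (d j), inv \<sigma> j := 0)"
proof -
  have "i \<noteq> j"
    using assms(2,3) by auto
  have \<sigma>_inv: "\<sigma> (inv \<sigma> y) = y" for y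
    using permutes_inverses(1)[OF \<sigma>] .
  have \<sigma>_eq_iff: "\<sigma> k = y \<longleftrightarrow> k = inv \<sigma> y" for k y
    using permutes_inv_eq[OF \<sigma>] by metis
  have "inv \<sigma> i \<noteq> inv \<sigma> j"
    using \<open>i \<noteq> j\<close> \<sigma>_inv by metis
  show "incr_on T' d \<circ> \<sigma> = g(inv \<sigma> i := 0, inv \<sigma> j := Suc (d j))"
  proof
    fix k
    consider "k = inv \<sigma> i" | "k = inv \<sigma> j" | "\<sigma> k \<noteq> i" "\<sigma> k \<noteq> j"
      using \<sigma>_eq_iff by blast
    then show "(incr_on T' d \<circ> \<sigma>) k = (g(inv \<sigma> i := 0, inv \<sigma> j := Suc (d j))) k"
      by cases (use \<open>i \<noteq> j\<close> \<open>inv \<sigma> i \<noteq> inv \<sigma> j\<close> \<sigma>_inv assms(3,4) in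
          \<open>auto simp: g_def incr_on_def T'_def\<close>)
  qed
  show "incr_on T' d \<circ> (Transposition.transpose i j \<circ> \<sigma>) = g(inv \<sigma> i := Suc (d j), inv \<sigma> j := 0)"
  proof
    fix k
    consider "k = inv \<sigma> i" | "k = inv \<sigma> j" | "\<sigma> k \<noteq> i" "\<sigma> k \<noteq> j"
      using \<sigma>_eq_iff by blast
    then show "(incr_on T' d \<circ> (Transposition.transpose i j \<circ> \<sigma>)) k
        = (g(inv \<sigma> i := Suc (d j), inv \<sigma> j := 0)) k"
      by cases (use \<open>i \<noteq> j\<close> \<open>inv \<sigma> i \<noteq> inv \<sigma> j\<close> \<sigma>_inv assms(2,3,4) in
          \<open>auto simp: g_def incr_on_def T'_def\<close>)
  qed
qed

context idempotent_semiring
begin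

lemma monom_le_orbit_sum: "\<sigma> permutes {..<n} \<Longrightarrow> monom n (d \<circ> \<sigma>) (x::nat \<Rightarrow> 'a) \<preceq> orbit_sum n d x"
  unfolding orbit_sum_def by (rule sr_le_sum[OF finite_permutes_lessThan]) simp

lemma orbit_sum_zero:
  assumes "\<And>j. j < n \<Longrightarrow> d j = 0"
  shows "orbit_sum n d (x::nat \<Rightarrow> 'a) = 1"
proof -
  have "monom n (d \<circ> \<sigma>) x = 1" if "\<sigma> permutes {..<n}" for \<sigma>
    unfolding monom_def using assms permutes_in_image[OF that] by simp
  then have "orbit_sum n d x = (\<Sum>\<sigma> | \<sigma> permutes {..<n}. 1)"
    unfolding orbit_sum_def by simp
  also have "\<dots> = 1"
    by (rule sum_const_idem[OF finite_permutes_lessThan]) (use permutes_id in blast)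
  finally show ?thesis .
qed

lemma orbit_sum_incr_on_le_esym_mult:
  assumes S: "S \<subseteq> {..<n}"
  shows "orbit_sum n (incr_on S d) x \<preceq> esym n (card S) x * orbit_sum n d (x::nat \<Rightarrow> 'a)"
  unfolding esym_mult_orbit_sum_expand orbit_sum_def[of n "incr_on S d"]
proof (rule sr_sum_le, clarify)
  fix \<sigma> assume \<sigma>: "\<sigma> permutes {..<n}"
  define T where "T = inv \<sigma> ` S"
  have "\<sigma> ` T = S"
    unfolding T_def image_comp using permutes_inverses(1)[OF \<sigma>] by (simp add: comp_def)
  have "T \<subseteq> {..<n}" "card T = card S"
    unfolding T_def using permutes_image[OF permutes_inv[OF \<sigma>]] S
      inj_on_subset[OF permutes_inj[OF permutes_inv[OF \<sigma>]]] by (auto simp: card_image)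
  have fin: "finite {T. T \<subseteq> {..<n} \<and> card T = card S}"
    by (rule finite_subset[of _ "Pow {..<n}"]) auto
  have "monom n (incr_on S d \<circ> \<sigma>) x
      \<preceq> (\<Sum>\<tau> | \<tau> permutes {..<n}. monom n (incr_on (\<tau> ` T) d \<circ> \<tau>) x)"
    using sr_le_sum[OF finite_permutes_lessThan,
        where a = \<sigma> and f = "\<lambda>\<tau>. monom n (incr_on (\<tau> ` T) d \<circ> \<tau>) x"] \<sigma> \<open>\<sigma> ` T = S\<close>
    by simp
  also have "\<dots> \<preceq> (\<Sum>T | T \<subseteq> {..<n} \<and> card T = card S. \<Sum>\<tau> | \<tau> permutes {..<n}.
      monom n (incr_on (\<tau> ` T) d \<circ> \<tau>) x)"
    using sr_le_sum[OF fin, of T] \<open>T \<subseteq> {..<n}\<close> \<open>card T = card S\<close> by simp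
  finally show "monom n (incr_on S d \<circ> \<sigma>) x \<preceq> \<dots>" .
qed

lemma peval_sym_pexpr:
  assumes "sym_pexpr n p"
  shows "peval p (x::nat \<Rightarrow> 'a) = (\<Sum>(a, d)\<leftarrow>p. a * orbit_sum n (\<lambda>j. d ! j) x)"
proof -
  have len: "length d = n" if "(a, d) \<in> set p" for a d
    using assms that unfolding sym_pexpr_def is_pexpr_def by auto
  have "peval p x = (\<Sum>(a, d)\<leftarrow>p. a * monom n (\<lambda>j. d ! j) x)"
    unfolding peval_def monom_def by (intro arg_cong[where f = sum_list] map_cong refl) (auto dest: len)
  also have "\<dots> = (\<Sum>(a, d)\<leftarrow>p. a * orbit_sum n (\<lambda>j. d ! j) x)"
  proof (rule sr_le_antisym)
    show "(\<Sum>(a, d)\<leftarrow>p. a * monom n (\<lambda>j. d ! j) x) \<preceq> (\<Sum>(a, d)\<leftarrow>p. a * orbit_sum n (\<lambda>j. d ! j) x)"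
      using monom_le_orbit_sum[OF permutes_id] by (auto intro!: sr_sum_list_mono sr_mult_left_mono)
    show "(\<Sum>(a, d)\<leftarrow>p. a * orbit_sum n (\<lambda>j. d ! j) x) \<preceq> (\<Sum>(a, d)\<leftarrow>p. a * monom n (\<lambda>j. d ! j) x)"
    proof (rule sr_sum_list_le, clarify)
      fix a d assume ad: "(a, d) \<in> set p"
      have "a * orbit_sum n (\<lambda>j. d ! j) x = (\<Sum>\<sigma> | \<sigma> permutes {..<n}. a * monom n ((\<lambda>j. d ! j) \<circ> \<sigma>) x)"
        unfolding orbit_sum_def by (simp add: sum_distrib_left)
      also have "\<dots> \<preceq> (\<Sum>(a, d)\<leftarrow>p. a * monom n (\<lambda>j. d ! j) x)"
      proof (rule sr_sum_le, clarify)
        fix \<sigma> assume "\<sigma> permutes {..<n}"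
        then have "(a, map (\<lambda>j. d ! \<sigma> j) [0..<n]) \<in> set p"
          using assms ad unfolding sym_pexpr_def by fast
        moreover have "monom n ((\<lambda>j. d ! j) \<circ> \<sigma>) x = monom n (\<lambda>j. map (\<lambda>j. d ! \<sigma> j) [0..<n] ! j) x"
          by (rule monom_cong) simp
        ultimately show "a * monom n ((\<lambda>j. d ! j) \<circ> \<sigma>) x \<preceq> (\<Sum>(a, d)\<leftarrow>p. a * monom n (\<lambda>j. d ! j) x)"
          using sr_le_sum_list[of _ p "\<lambda>(a, d). a * monom n (\<lambda>j. d ! j) x"] by fastforce
      qed
      finally show "a * orbit_sum n (\<lambda>j. d ! j) x \<preceq> (\<Sum>(a, d)\<leftarrow>p. a * monom n (\<lambda>j. d ! j) x)" .
    qed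
  qed
  finally show ?thesis .
qed

end

locale frobenius_semiring = idempotent_semiring ty for ty :: "'a::unital_comm_semiring itself" +
  assumes power_add_frobenius: "m \<ge> 1 \<Longrightarrow> ((u::'a) + v) ^ m = u ^ m + v ^ m"
begin

lemma power_mult_le: "(u::'a) ^ a * v \<preceq> u ^ Suc a + v ^ Suc a"
proof -
  have "u ^ a * v \<preceq> (u + v) ^ a * (u + v)"
    by (intro sr_mult_mono sr_power_mono sr_le_add1 sr_le_add2)
  also have "\<dots> = u ^ Suc a + v ^ Suc a"
    using power_add_frobenius[of "Suc a" u v] by (simp add: mult.commute)
  finally show ?thesis .
qed

lemma monom_exchange_le:
  assumes "p \<noteq> q" "p < n" "q < n" "g p = 1"
  shows "monom n g (x::nat \<Rightarrow> 'a)
    \<preceq> monom n (g(p := 0, q := Suc (g q))) x + monom n (g(p := Suc (g q), q := 0)) x"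
proof -
  have split: "monom n h x = x p ^ h p * (x q ^ h q * (\<Prod>j\<in>{..<n}-{p}-{q}. x j ^ h j))" for h
  proof -
    have "monom n h x = x p ^ h p * (\<Prod>j\<in>{..<n}-{p}. x j ^ h j)"
      unfolding monom_def using assms(2) by (simp add: prod.remove)
    also have "(\<Prod>j\<in>{..<n}-{p}. x j ^ h j) = x q ^ h q * (\<Prod>j\<in>{..<n}-{p}-{q}. x j ^ h j)"
      using assms(1,3) by (subst prod.remove[of _ q]) auto
    finally show ?thesis .
  qed
  define R where "R = (\<Prod>j\<in>{..<n}-{p}-{q}. x j ^ g j)"
  have rest: "(\<Prod>j\<in>{..<n}-{p}-{q}. x j ^ (g(p := a, q := b)) j) = R" for a b
    unfolding R_def by (intro prod.cong) auto
  have "monom n g x = (x q ^ g q * x p) * R"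
    using split[of g] assms(4) unfolding R_def by (simp add: mult_ac)
  also have "\<dots> \<preceq> (x q ^ Suc (g q) + x p ^ Suc (g q)) * R"
    by (intro sr_mult_right_mono power_mult_le)
  also have "\<dots> = monom n (g(p := 0, q := Suc (g q))) x + monom n (g(p := Suc (g q), q := 0)) x"
    using split rest assms(1) by (simp add: distrib_right)
  finally show ?thesis .
qed

lemma monom_incr_on_exchange_le:
  assumes \<sigma>: "\<sigma> permutes {..<n}" and "i \<in> T" "j \<notin> T" "i < n" "j < n" "d i = 0"
  defines "T' \<equiv> insert j (T - {i})"
  shows "monom n (incr_on T d \<circ> \<sigma>) (x::nat \<Rightarrow> 'a)
    \<preceq> monom n (incr_on T' d \<circ> \<sigma>) x + monom n (incr_on T' d \<circ> (Transposition.transpose i j \<circ> \<sigma>)) x"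
proof -
  define g where "g = incr_on T d \<circ> \<sigma>"
  have "inv \<sigma> i \<noteq> inv \<sigma> j"
    using assms(2,3) permutes_inverses(1)[OF \<sigma>] by metis
  moreover have "inv \<sigma> i < n" "inv \<sigma> j < n"
    using permutes_in_image[OF permutes_inv[OF \<sigma>]] assms(4,5) by auto
  moreover have "g (inv \<sigma> i) = 1" "g (inv \<sigma> j) = d j"
    using permutes_inverses(1)[OF \<sigma>] assms(2,3,6) by (simp_all add: g_def incr_on_def)
  ultimately show ?thesis
    using monom_exchange_le[of "inv \<sigma> i" "inv \<sigma> j" n g x]
    unfolding T'_def incr_on_exchange_comp[where d = d, OF \<sigma> assms(2,3,6)] g_def by simp
qed

text \<open>Induction on \<open>|T - S|\<close>: an exchange moves one element of \<open>T - S\<close> into \<open>S\<close>, and both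
  monomials it produces are permuted versions of the one for the new set.\<close>

lemma monom_incr_on_le_orbit_sum:
  assumes S: "S \<subseteq> {..<n}" and d: "\<forall>j\<in>{..<n} - S. d j = 0"
  shows "T \<subseteq> {..<n} \<Longrightarrow> card T = card S \<Longrightarrow> \<sigma> permutes {..<n} \<Longrightarrow>
    monom n (incr_on T d \<circ> \<sigma>) (x::nat \<Rightarrow> 'a) \<preceq> orbit_sum n (incr_on S d) x"
proof (induction "card (T - S)" arbitrary: T \<sigma> rule: less_induct)
  case less
  have "finite S" "finite T"
    using S less.prems(1) finite_subset by blast+
  show ?case
  proof (cases "T \<subseteq> S")
    case True
    have "T = S"
      by (rule card_subset_eq[OF \<open>finite S\<close> True less.prems(2)])
    then show ?thesis
      using monom_le_orbit_sum[OF less.prems(3)] by simp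
  next
    case False
    then obtain i j where ij: "i \<in> T" "i \<notin> S" "j \<in> S" "j \<notin> T"
      and card_T': "card (insert j (T - {i})) = card S"
      and smaller: "card (insert j (T - {i}) - S) < card (T - S)"
      using obtain_exchange_pair[OF \<open>finite T\<close> \<open>finite S\<close> less.prems(2)] by metis
    define T' where "T' = insert j (T - {i})"
    have "i < n" "j < n"
      using ij less.prems(1) S by auto
    then have "T' \<subseteq> {..<n}"
      using less.prems(1) by (auto simp: T'_def)
    then have IH: "monom n (incr_on T' d \<circ> \<tau>) x \<preceq> orbit_sum n (incr_on S d) x"
      if "\<tau> permutes {..<n}" for \<tau>
      using less.hyps[OF smaller[folded T'_def] _ card_T'[folded T'_def] that] by blast
    have "Transposition.transpose i j \<circ> \<sigma> permutes {..<n}"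
      using \<open>i < n\<close> \<open>j < n\<close> less.prems(3) by (simp add: permutes_compose permutes_swap_id)
    moreover have "monom n (incr_on T d \<circ> \<sigma>) x
        \<preceq> monom n (incr_on T' d \<circ> \<sigma>) x + monom n (incr_on T' d \<circ> (Transposition.transpose i j \<circ> \<sigma>)) x"
      unfolding T'_def using less.prems(3) ij \<open>i < n\<close> \<open>j < n\<close> d
      by (intro monom_incr_on_exchange_le) auto
    ultimately show ?thesis
      using IH less.prems(3) sr_add_le sr_le_trans by meson
  qed
qed

lemma esym_mult_orbit_sum:
  assumes S: "S \<subseteq> {..<n}" and d: "\<forall>j\<in>{..<n} - S. d j = 0"
  shows "esym n (card S) x * orbit_sum n d (x::nat \<Rightarrow> 'a) = orbit_sum n (incr_on S d) x"
proof (rule sr_le_antisym)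
  show "esym n (card S) x * orbit_sum n d x \<preceq> orbit_sum n (incr_on S d) x"
    unfolding esym_mult_orbit_sum_expand
  proof (rule sr_sum_le, rule sr_sum_le, clarify)
    fix T \<sigma> assume T: "T \<subseteq> {..<n}" "card T = card S" and \<sigma>: "\<sigma> permutes {..<n}"
    have "\<sigma> ` T \<subseteq> {..<n}"
      using T(1) permutes_image[OF \<sigma>] by blast
    moreover have "card (\<sigma> ` T) = card S"
      using T(2) inj_on_subset[OF permutes_inj[OF \<sigma>]] by (simp add: card_image)
    ultimately show "monom n (incr_on (\<sigma> ` T) d \<circ> \<sigma>) x \<preceq> orbit_sum n (incr_on S d) x"
      using \<sigma> by (rule monom_incr_on_le_orbit_sum[OF S d])
  qed
qed (rule orbit_sum_incr_on_le_esym_mult[OF S])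

lemma orbit_sum_eq_esym_mult:
  "orbit_sum n d (x::nat \<Rightarrow> 'a) = esym n (card {j. j < n \<and> 0 < d j}) x * orbit_sum n (\<lambda>j. d j - 1) x"
proof -
  let ?S = "{j. j < n \<and> 0 < d j}"
  have "orbit_sum n d x = orbit_sum n (incr_on ?S (\<lambda>j. d j - 1)) x"
    by (rule orbit_sum_cong) (auto simp: incr_on_def)
  also have "\<dots> = esym n (card ?S) x * orbit_sum n (\<lambda>j. d j - 1) x"
    by (rule esym_mult_orbit_sum[symmetric]) auto
  finally show ?thesis .
qed

lemma orbit_sum_eq_prod_esym_power:
  "\<exists>c. length c = n \<and> (\<forall>x. orbit_sum n d x = (\<Prod>j<n. esym n (Suc j) (x::nat \<Rightarrow> 'a) ^ (c ! j)))"
proof (induction "\<Sum>j<n. d j" arbitrary: d rule: less_induct)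
  case less
  show ?case
  proof (cases "\<forall>j<n. d j = 0")
    case True
    have "orbit_sum n d x = (\<Prod>j<n. esym n (Suc j) x ^ (replicate n 0 ! j))" for x :: "nat \<Rightarrow> 'a"
      using True by (simp add: orbit_sum_zero)
    then show ?thesis
      by (intro exI[of _ "replicate n 0"]) simp
  next
    case False
    then obtain j0 where j0: "j0 < n" "0 < d j0"
      by blast
    have "(\<Sum>j<n. d j - 1) < (\<Sum>j<n. d j)"
      using j0 by (intro sum_strict_mono_ex1) (auto intro!: bexI[of _ j0])
    then obtain c where c: "length c = n"
        "\<And>x::nat \<Rightarrow> 'a. orbit_sum n (\<lambda>j. d j - 1) x = (\<Prod>j<n. esym n (Suc j) x ^ (c ! j))"
      using less.hyps by blast
    define k where "k = card {j. j < n \<and> 0 < d j} - 1"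
    have "card {j. j < n \<and> 0 < d j} \<noteq> 0"
      using j0 by auto
    moreover have "card {j. j < n \<and> 0 < d j} \<le> n"
      using card_mono[of "{..<n}" "{j. j < n \<and> 0 < d j}"] by auto
    ultimately have "Suc k = card {j. j < n \<and> 0 < d j}" "k < n"
      unfolding k_def by arith+
    have "orbit_sum n d x = (\<Prod>j<n. esym n (Suc j) x ^ (c[k := Suc (c ! k)] ! j))"
      for x :: "nat \<Rightarrow> 'a"
    proof -
      have "orbit_sum n d x = esym n (Suc k) x * (\<Prod>j<length c. esym n (Suc j) x ^ (c ! j))"
        unfolding orbit_sum_eq_esym_mult[of n d x] c(2) \<open>Suc k = _\<close> c(1) ..
      also have "\<dots> = (\<Prod>j<n. esym n (Suc j) x ^ (c[k := Suc (c ! k)] ! j))"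
        using prod_power_list_update_Suc[of k c "\<lambda>j. esym n (Suc j) x"] \<open>k < n\<close> c(1) by simp
      finally show ?thesis .
    qed
    then show ?thesis
      using c by (intro exI[of _ "c[k := Suc (c ! k)]"]) simp
  qed
qed

lemma frobenius_n_elementary: "n_elementary n ty"
  unfolding n_elementary_def
proof (intro allI impI)
  fix p :: "'a pexpr" assume p: "sym_pexpr n p"
  have "\<forall>d. \<exists>c. length c = n \<and>
      (\<forall>x. orbit_sum n (\<lambda>j. d ! j) x = (\<Prod>j<n. esym n (Suc j) (x::nat \<Rightarrow> 'a) ^ (c ! j)))"
    by (intro allI orbit_sum_eq_prod_esym_power)
  then obtain C where C: "\<forall>d. length (C d) = n \<and>
      (\<forall>x. orbit_sum n (\<lambda>j. d ! j) x = (\<Prod>j<n. esym n (Suc j) (x::nat \<Rightarrow> 'a) ^ (C d ! j)))"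
    by (rule choice[THEN exE])
  define r where "r = map (\<lambda>(a, d). (a, C d)) p"
  have "is_pexpr n r"
    unfolding r_def is_pexpr_def by (auto simp: C)
  moreover have "peval p x = peval r (\<lambda>j. esym n (Suc j) x)" for x :: "nat \<Rightarrow> 'a"
  proof -
    have "peval (map (\<lambda>(a, d). (a, C d)) q) (\<lambda>j. esym n (Suc j) x)
        = (\<Sum>(a, d)\<leftarrow>q. a * orbit_sum n (\<lambda>j. d ! j) x)" for q
      by (induction q) (auto simp: peval_def C)
    then show ?thesis
      unfolding peval_sym_pexpr[OF p] r_def by simp
  qed
  ultimately show "\<exists>r. is_pexpr n r \<and> (\<forall>x. peval p x = peval r (\<lambda>j. esym n (Suc j) x))"
    by blast
qed

end

theorem corollary4p7:
  assumes "idempotent_sr TYPE('a::unital_comm_semiring)"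
  shows "fully_elementary TYPE('a) \<longleftrightarrow> frobenius TYPE('a)"
proof -
  interpret idempotent_semiring "TYPE('a)"
    using assms by unfold_locales (simp add: idempotent_sr_def)
  show ?thesis
  proof
    assume "fully_elementary TYPE('a)"
    then show "frobenius TYPE('a)"
      unfolding fully_elementary_def frobenius_def by (blast intro: frobenius_power_if_2_elementary)
  next
    assume "frobenius TYPE('a)"
    then interpret frobenius_semiring "TYPE('a)"
      by unfold_locales (simp add: frobenius_def)
    show "fully_elementary TYPE('a)"
      unfolding fully_elementary_def by (blast intro: frobenius_n_elementary)
  qed
qed

end
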